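(* Let $n\ge1$. If $n\notin\{2^m-1,2^m,2^m+1\}$ for every $m\ge1$, then the maximally balanced tree $T^{mb}_n$ is not isomorphic to the GFB tree with $n$ leaves; in particular there are at least two non-isomorphic trees $T\in\mathcal{T}_n$ with $\mathcal{C}(T)=c_n$. If $n\in\{2^m-1,2^m,2^m+1\}$ for some $m\ge1$, then there is exactly one tree $T\in\mathcal{T}_n$ with $\mathcal{C}(T)=c_n$.
   Context: Bifurcating trees: rooted trees in which every internal node has exactly two children, considered up to isomorphism; $\mathcal{T}_n$ is the set of such trees with $n$ leaves. For a node $w$, $\kappa_T(w)$ is its number of descendant leaves. The Colless index is $\mathcal{C}(T)=\sum_{v}|\kappa_T(v_1)-\kappa_T(v_2)|$, summed over internal nodes $v$ with children $v_1,v_2$; $c_n=\min\{\mathcal{C}(T):T\in\mathcal{T}_n\}$. $T^{mb}_n$ is the unique tree in $\mathcal{T}_n$ in which at every internal node the numbers of descendant leaves of the two children differ by at most 1. GFB trees: start with a multiset of $n$ single-node trees; while the multiset has more than one tree, remove a tree $u$ with the minimum number of leaves, then remove a tree $v$ with the minimum number of leaves among the remaining trees, and insert the tree consisting of a new root whose two children are the roots of $u$ and $v$; the final tree is the GFB tree with $n$ leaves (it is unique up to isomorphism). *)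

theory Defs
  imports Main "HOL-Library.Multiset"
begin

text \<open>Bifurcating (binary) trees; trees are ordered here, and isomorphism
  (swapping children) is made explicit by the predicate btree_iso.\<close>
datatype btree = Leaf | Node btree btree

fun leaves :: "btree \<Rightarrow> nat" where
  "leaves Leaf = 1"
| "leaves (Node l r) = leaves l + leaves r"

definition natdist :: "nat \<Rightarrow> nat \<Rightarrow> nat" where
  "natdist a b = (if a \<le> b then b - a else a - b)"

fun colless :: "btree \<Rightarrow> nat" where
  "colless Leaf = 0"
| "colless (Node l r) = colless l + colless r + natdist (leaves l) (leaves r)"

inductive btree_iso :: "btree \<Rightarrow> btree \<Rightarrow> bool" where
  iso_leaf: "btree_iso Leaf Leaf"
| iso_same: "btree_iso a c \<Longrightarrow> btree_iso b d \<Longrightarrow> btree_iso (Node a b) (Node c d)"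
| iso_swap: "btree_iso a d \<Longrightarrow> btree_iso b c \<Longrightarrow> btree_iso (Node a b) (Node c d)"

definition min_colless :: "nat \<Rightarrow> nat" where
  "min_colless n = Min {colless T | T. leaves T = n}"

fun max_balanced :: "btree \<Rightarrow> bool" where
  "max_balanced Leaf = True"
| "max_balanced (Node l r) =
     (max_balanced l \<and> max_balanced r \<and> natdist (leaves l) (leaves r) \<le> 1)"

inductive gfb_step :: "btree multiset \<Rightarrow> btree multiset \<Rightarrow> bool" where
  "u \<in># M \<Longrightarrow> (\<forall>w \<in># M. leaves u \<le> leaves w) \<Longrightarrow>
   v \<in># M - {#u#} \<Longrightarrow> (\<forall>w \<in># M - {#u#}. leaves v \<le> leaves w) \<Longrightarrow>
   gfb_step M (M - {#u#} - {#v#} + {#Node u v#})"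

definition gfb_tree :: "nat \<Rightarrow> btree \<Rightarrow> bool" where
  "gfb_tree n T = gfb_step\<^sup>*\<^sup>* (replicate_mset n Leaf) {#T#}"

end

theory Submission
  imports Defs
begin

text \<open>Write \<open>g n\<close> for the Colless index of the maximally balanced tree with \<open>n\<close> leaves, so that
  \<open>g n = g \<lceil>n/2\<rceil> + g \<lfloor>n/2\<rfloor> + n mod 2\<close>. Splitting \<open>a\<close> and \<open>b\<close> into halves and regrouping
  them crosswise gives \<open>g (a + b) \<le> g a + g b + |a - b|\<close>, so \<open>g n\<close> is the minimal Colless index.
  Since \<open>g (2^k) = 0\<close>, \<open>g (2^k + 1) = k\<close>, \<open>g (2^k - 1) = k - 1\<close> and \<open>g x \<ge> k\<close> for
  \<open>2^k < x < 2^(k+1)\<close>, a root split with \<open>|a - b| \<ge> 2\<close> is strictly suboptimal when \<open>n\<close> is within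
  one of a power of two; as the halves of such \<open>n\<close> are of the same kind, every optimal tree is then
  maximally balanced. Otherwise one of the halves of \<open>n\<close> is again not within one of a power of two,
  and induction supplies two optimal subtrees, unless \<open>n = 2 (2q + 1)\<close>, where the split
  \<open>2q + (2q + 2)\<close> is optimal as well. Finally, while the GFB process only merges balanced pairs,
  every tree size stays within one of a power of two and at most one of them is not a power of two,
  so a maximally balanced GFB tree has such a leaf count.\<close>

lemma natdist_sym: "natdist a b = natdist b a"
  by (simp add: natdist_def)

lemma natdist_le_1_halves:
  assumes "natdist a b \<le> 1"
  shows "(a = (a + b + 1) div 2 \<and> b = (a + b) div 2) \<or> (b = (a + b + 1) div 2 \<and> a = (a + b) div 2)"
  using assms unfolding natdist_def by (auto split: if_splits)

lemma leaves_pos: "1 \<le> leaves T"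
  by (induction T) auto

lemma btree_iso_leaves: "btree_iso a b \<Longrightarrow> leaves a = leaves b"
  by (induction rule: btree_iso.induct) auto

lemma btree_iso_max_balanced: "btree_iso a b \<Longrightarrow> max_balanced a \<Longrightarrow> max_balanced b"
  by (induction rule: btree_iso.induct) (auto simp: btree_iso_leaves natdist_sym)

lemma btree_iso_trans: "btree_iso a b \<Longrightarrow> btree_iso b c \<Longrightarrow> btree_iso a c"
proof (induction arbitrary: c rule: btree_iso.induct)
  case iso_leaf
  then show ?case by simp
next
  case iso_same
  from iso_same.prems show ?case
    by cases (auto intro: btree_iso.intros iso_same.IH)
next
  case iso_swap
  from iso_swap.prems show ?case
    by cases (auto intro: btree_iso.intros iso_swap.IH)
qed

lemma not_btree_iso_Node_left:
  "\<not> btree_iso T1 T2 \<Longrightarrow> \<not> btree_iso (Node T1 X) (Node T2 X)"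
  by (auto elim: btree_iso.cases intro: btree_iso_trans)

section \<open>The Colless index of maximally balanced trees\<close>

fun mb_colless :: "nat \<Rightarrow> nat" where
  "mb_colless n = (if n \<le> 1 then 0 else mb_colless ((n + 1) div 2) + mb_colless (n div 2) + n mod 2)"

declare mb_colless.simps [simp del]

lemma mb_colless_0_1 [simp]: "mb_colless 0 = 0" "mb_colless (Suc 0) = 0"
  by (simp_all add: mb_colless.simps)

lemma mb_colless_rec:
  "2 \<le> n \<Longrightarrow> mb_colless n = mb_colless ((n + 1) div 2) + mb_colless (n div 2) + n mod 2"
  by (simp add: mb_colless.simps)

lemma mb_colless_balanced:
  assumes "natdist a b \<le> 1" "2 \<le> a + b"
  shows "mb_colless (a + b) = mb_colless a + mb_colless b + natdist a b"
proof -
  have "natdist a b = (a + b) mod 2"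
    using assms(1) unfolding natdist_def by (auto split: if_splits) presburger+
  then show ?thesis
    using natdist_le_1_halves[OF assms(1)] mb_colless_rec[OF assms(2)] by auto
qed

lemma mb_colless_double: "mb_colless (2 * p) = 2 * mb_colless p"
  using mb_colless_balanced[of p p] by (cases "p = 0") (auto simp: natdist_def mult_2)

lemma mb_colless_odd: "1 \<le> p \<Longrightarrow> mb_colless (2 * p + 1) = mb_colless (p + 1) + mb_colless p + 1"
  using mb_colless_balanced[of "p + 1" p] by (simp add: natdist_def mult_2)

lemma mb_colless_add_le_unbalanced:
  assumes IH: "\<And>x y. x + y < a + b \<Longrightarrow> mb_colless (x + y) \<le> mb_colless x + mb_colless y + natdist x y"
    and "1 \<le> a" "a + 2 \<le> b"
  shows "mb_colless (a + b) \<le> mb_colless a + mb_colless b + (b - a)"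
proof -
  define a1 a2 b1 b2 where "a1 = (a + 1) div 2" "a2 = a div 2" "b1 = (b + 1) div 2" "b2 = b div 2"
  have halves: "a1 + a2 = a" "a2 \<le> a1" "a1 \<le> a2 + 1" "b1 + b2 = b" "b2 \<le> b1" "b1 \<le> b2 + 1" "a1 \<le> b2"
    using assms(3) unfolding a1_a2_b1_b2_def by linarith+
  have gb: "mb_colless b = mb_colless b1 + mb_colless b2 + b mod 2"
    using mb_colless_rec[of b] assms(3) unfolding a1_a2_b1_b2_def by simp
  have regroup: "mb_colless (a + b) = mb_colless (a1 + b2) + mb_colless (a2 + b1) + (a + b) mod 2"
  proof -
    have "natdist (a1 + b2) (a2 + b1) \<le> 1" "2 \<le> (a1 + b2) + (a2 + b1)"
      using halves assms(2) unfolding natdist_def by auto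
    moreover have "natdist (a1 + b2) (a2 + b1) = (a + b) mod 2"
    proof -
      have "a1 = a2 + a mod 2" "b1 = b2 + b mod 2"
        unfolding a1_a2_b1_b2_def by presburger+
      moreover have "a mod 2 = 0 \<or> a mod 2 = 1" "b mod 2 = 0 \<or> b mod 2 = 1"
        by presburger+
      moreover have "(a + b) mod 2 = (a mod 2 + b mod 2) mod 2"
        by (simp add: mod_add_eq)
      ultimately show ?thesis
        by (auto simp: natdist_def)
    qed
    moreover have "(a1 + b2) + (a2 + b1) = a + b"
      using halves by simp
    ultimately show ?thesis
      using mb_colless_balanced[of "a1 + b2" "a2 + b1"] by simp
  qed
  have le1: "mb_colless (a1 + b2) \<le> mb_colless a1 + mb_colless b2 + (b2 - a1)"
    using IH[of a1 b2] halves assms(2) by (simp add: natdist_def)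
  have parity: "(a + b) mod 2 \<le> a mod 2 + b mod 2"
    by presburger
  show ?thesis
  proof (cases "a = 1")
    case True
    then have "a1 = 1" "a mod 2 = 1" "mb_colless a1 = 0" "mb_colless (a2 + b1) = mb_colless b1"
      unfolding a1_a2_b1_b2_def by simp_all
    then show ?thesis
      using regroup le1 gb parity halves assms(3) by linarith
  next
    case False
    have ga: "mb_colless a = mb_colless a1 + mb_colless a2 + a mod 2"
      using mb_colless_rec[of a] False assms(2) unfolding a1_a2_b1_b2_def by simp
    have le2: "mb_colless (a2 + b1) \<le> mb_colless a2 + mb_colless b1 + (b1 - a2)"
      using IH[of a2 b1] halves assms(2) by (simp add: natdist_def)
    show ?thesis
      using regroup le1 le2 ga gb parity halves by linarith
  qed
qed

lemma mb_colless_add_le: "mb_colless (a + b) \<le> mb_colless a + mb_colless b + natdist a b"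
proof (induction "a + b" arbitrary: a b rule: less_induct)
  case less
  have ordered: "mb_colless (x + y) \<le> mb_colless x + mb_colless y + natdist x y"
    if "x \<le> y" "x + y = a + b" for x y
  proof -
    consider "x = 0" | "1 \<le> x" "y \<le> x + 1" | "1 \<le> x" "x + 2 \<le> y"
      using that(1) by linarith
    then show ?thesis
    proof cases
      case 1
      then show ?thesis by simp
    next
      case 2
      then show ?thesis
        using mb_colless_balanced[of x y] that(1) by (simp add: natdist_def)
    next
      case 3
      then show ?thesis
        using mb_colless_add_le_unbalanced[of x y] less that by (simp add: natdist_def)
    qed
  qed
  show ?case
    using ordered[of a b] ordered[of b a] by (cases "a \<le> b") (auto simp: natdist_sym add.commute)
qed

fun mb_tree :: "nat \<Rightarrow> btree" where
  "mb_tree n = (if n \<le> 1 then Leaf else Node (mb_tree ((n + 1) div 2)) (mb_tree (n div 2)))"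

declare mb_tree.simps [simp del]

lemma mb_tree_Leaf: "n \<le> 1 \<Longrightarrow> mb_tree n = Leaf"
  by (simp add: mb_tree.simps)

lemma mb_tree_rec: "2 \<le> n \<Longrightarrow> mb_tree n = Node (mb_tree ((n + 1) div 2)) (mb_tree (n div 2))"
  by (simp add: mb_tree.simps)

lemma leaves_mb_tree: "1 \<le> n \<Longrightarrow> leaves (mb_tree n) = n"
proof (induction n rule: mb_tree.induct)
  case (1 n)
  show ?case
  proof (cases "n = 1")
    case True
    then show ?thesis by (simp add: mb_tree_Leaf)
  next
    case False
    then have "2 \<le> n" "1 \<le> (n + 1) div 2" "1 \<le> n div 2"
      using "1.prems" by linarith+
    then show ?thesis
      using "1.IH" by (simp add: mb_tree_rec)
  qed
qed

lemma colless_mb_tree: "colless (mb_tree n) = mb_colless n"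
proof (induction n rule: mb_tree.induct)
  case (1 n)
  show ?case
  proof (cases "n \<le> 1")
    case True
    then show ?thesis by (simp add: mb_tree_Leaf mb_colless.simps)
  next
    case False
    then have "2 \<le> n" "1 \<le> (n + 1) div 2" "1 \<le> n div 2"
      by linarith+
    moreover have "natdist ((n + 1) div 2) (n div 2) = n mod 2"
    proof -
      have "(n + 1) div 2 = n div 2 + n mod 2"
        by presburger
      then show ?thesis
        by (simp add: natdist_def)
    qed
    ultimately show ?thesis
      using "1.IH" False by (simp add: mb_tree_rec mb_colless_rec[of n] leaves_mb_tree)
  qed
qed

lemma mb_colless_le_colless: "mb_colless (leaves T) \<le> colless T"
proof (induction T)
  case (Node l r)
  then show ?case
    using mb_colless_add_le[of "leaves l" "leaves r"] by simp
qed simp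

lemma colless_le_square: "colless T \<le> leaves T * leaves T"
proof (induction T)
  case (Node l r)
  have "natdist (leaves l) (leaves r) \<le> leaves l + leaves r"
    by (simp add: natdist_def le_diff_conv)
  moreover have "leaves l \<le> leaves l * leaves r" "leaves r \<le> leaves l * leaves r"
    using leaves_pos[of l] leaves_pos[of r] by simp_all
  ultimately have "natdist (leaves l) (leaves r) \<le> 2 * leaves l * leaves r"
    by linarith
  then show ?case
    using Node by (simp add: algebra_simps)
qed simp

lemma min_colless_eq_mb_colless:
  assumes "1 \<le> n"
  shows "min_colless n = mb_colless n"
  unfolding min_colless_def
proof (rule Min_eqI)
  show "finite {colless T |T. leaves T = n}"
    by (rule finite_subset[of _ "{..n * n}"]) (use colless_le_square in auto)
  show "mb_colless n \<in> {colless T |T. leaves T = n}"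
    using leaves_mb_tree[OF assms] colless_mb_tree[of n] by force
qed (use mb_colless_le_colless in auto)

definition optimal :: "btree \<Rightarrow> bool" where
  "optimal T \<longleftrightarrow> colless T = mb_colless (leaves T)"

lemma optimal_mb_tree: "optimal (mb_tree n)"
  unfolding optimal_def
  by (cases "n = 0") (simp_all add: colless_mb_tree leaves_mb_tree mb_tree_Leaf)

lemma optimal_NodeD:
  assumes "optimal (Node l r)"
  shows "optimal l" "optimal r"
    and "mb_colless (leaves l + leaves r) = mb_colless (leaves l) + mb_colless (leaves r) + natdist (leaves l) (leaves r)"
  using assms mb_colless_le_colless[of l] mb_colless_le_colless[of r]
    mb_colless_add_le[of "leaves l" "leaves r"]
  unfolding optimal_def by simp_all

lemma optimal_Node_balanced:
  assumes "optimal l" "optimal r" "natdist (leaves l) (leaves r) \<le> 1"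
  shows "optimal (Node l r)"
  using assms mb_colless_balanced[OF assms(3)] leaves_pos[of l] leaves_pos[of r]
  unfolding optimal_def by simp

section \<open>Leaf counts within one of a power of two\<close>

lemma pow2_eq_pow2_plus_1: "(2::nat)^j = 2^k + 1 \<Longrightarrow> k = 0"
proof (rule ccontr)
  assume eq: "(2::nat)^j = 2^k + 1" and "k \<noteq> 0"
  then have "odd ((2::nat)^j)"
    by simp
  then have "j = 0"
    by simp
  then show False
    using eq by simp
qed

definition near_pow2 :: "nat \<Rightarrow> bool" where
  "near_pow2 n \<longleftrightarrow> (\<exists>m\<ge>1. n \<in> {2^m - 1, 2^m, 2^m + 1})"

lemma near_pow2E:
  assumes "near_pow2 n"
  obtains (below) k where "n = 2 * 2^k - 1" | (exact) k where "n = 2 * 2^k" | (above) k where "n = 2 * 2^k + 1"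
proof -
  obtain m where m: "1 \<le> m" "n \<in> {2^m - 1, 2^m, 2^m + 1}"
    using assms unfolding near_pow2_def by blast
  then obtain k where "m = Suc k"
    by (cases m) auto
  with m(2) have "n = 2 * 2^k - 1 \<or> n = 2 * 2^k \<or> n = 2 * 2^k + 1"
    by simp
  then show ?thesis
    using that by blast
qed

lemma near_pow2_pow: "near_pow2 (2^k)"
proof (cases k)
  case 0
  then show ?thesis
    unfolding near_pow2_def by (intro exI[of _ 1]) simp
next
  case (Suc j)
  then show ?thesis
    unfolding near_pow2_def by (intro exI[of _ k]) simp
qed

lemma near_pow2_pow_plus_1: "near_pow2 (2^k + 1)"
proof (cases k)
  case 0
  then show ?thesis
    using near_pow2_pow[of 1] by (simp add: numeral_2_eq_2)
next
  case (Suc j)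
  then show ?thesis
    unfolding near_pow2_def by (intro exI[of _ k]) simp
qed

lemma near_pow2_pow_minus_1: "1 \<le> k \<Longrightarrow> near_pow2 (2^k - 1)"
  unfolding near_pow2_def by auto

lemma near_pow2_halves:
  assumes "near_pow2 n" "2 \<le> n"
  shows "near_pow2 ((n + 1) div 2)" "near_pow2 (n div 2)"
proof -
  have "near_pow2 ((n + 1) div 2) \<and> near_pow2 (n div 2)"
    using assms(1)
  proof (cases rule: near_pow2E)
    case (below k)
    with assms(2) have "1 \<le> k"
      by (cases k) auto
    moreover have "(n + 1) div 2 = 2^k" "n div 2 = 2^k - 1"
      using below by simp_all
    ultimately show ?thesis
      using near_pow2_pow near_pow2_pow_minus_1 by simp
  next
    case (exact k)
    then show ?thesis
      using near_pow2_pow by simp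
  next
    case (above k)
    then show ?thesis
      using near_pow2_pow near_pow2_pow_plus_1 by simp
  qed
  then show "near_pow2 ((n + 1) div 2)" "near_pow2 (n div 2)"
    by simp_all
qed

lemma mb_colless_pow: "mb_colless (2^k) = 0"
  by (induction k) (simp_all add: mb_colless_double)

lemma mb_colless_pow_plus_1: "mb_colless (2^k + 1) = k"
proof (induction k)
  case 0
  show ?case
    using mb_colless_pow[of 1] by (simp add: numeral_2_eq_2)
next
  case (Suc k)
  then show ?case
    using mb_colless_odd[of "2^k"] mb_colless_pow[of k] by simp
qed

lemma mb_colless_pow_minus_1: "mb_colless (2^k - 1) = k - 1"
proof (induction k)
  case (Suc k)
  show ?case
  proof (cases "k = 0")
    case False
    have "2 \<le> (2::nat)^k"
      using False by (cases k) auto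
    moreover have "(2::nat)^Suc k = 2 * 2^k"
      by simp
    ultimately have "(2::nat)^Suc k - 1 = 2 * (2^k - 1) + 1" "2^k - 1 + 1 = (2::nat)^k"
      "1 \<le> (2::nat)^k - 1"
      by linarith+
    then show ?thesis
      using mb_colless_odd[of "2^k - 1"] mb_colless_pow[of k] Suc False by simp
  qed simp
qed simp

lemma mb_colless_between_pow: "2^k < x \<Longrightarrow> x < 2^(k + 1) \<Longrightarrow> k \<le> mb_colless x"
proof (induction k arbitrary: x)
  case (Suc k)
  consider p where "x = 2 * p" | p where "x = 2 * p + 1"
    by (cases "even x") (auto elim: evenE oddE)
  then show ?case
  proof cases
    case 1
    with Suc.prems have p: "2^k < p" "p < 2^(k + 1)"
      by simp_all
    have "k \<noteq> 0"
    proof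
      assume "k = 0"
      then show False
        using p by simp
    qed
    moreover have "k \<le> mb_colless p"
      using Suc.IH p by simp
    ultimately show ?thesis
      using 1 by (simp add: mb_colless_double)
  next
    case 2
    with Suc.prems have p: "2^k \<le> p" "p < 2^(k + 1)"
      by simp_all
    have "1 \<le> (2::nat)^k"
      by simp
    then have "1 \<le> p"
      using p(1) by linarith
    \<comment> \<open>one of \<open>p\<close> and \<open>p + 1\<close> lies strictly between \<open>2^k\<close> and \<open>2^(k+1)\<close>, unless \<open>k = 0\<close>\<close>
    moreover have "k \<le> mb_colless p + mb_colless (p + 1)"
    proof (cases "k = 0 \<or> 2^k < p")
      case True
      then show ?thesis
        using Suc.IH[of p] p by auto
    next
      case False
      then have "p = 2^k"
        using p(1) by simp
      moreover have "2 \<le> (2::nat)^k"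
        using False by (cases k) auto
      ultimately have "2^k < p + 1" "p + 1 < 2^(k + 1)"
        by simp_all
      then show ?thesis
        using Suc.IH[of "p + 1"] by simp
    qed
    ultimately show ?thesis
      using 2 mb_colless_odd[of p] by simp
  qed
qed simp

lemma mb_colless_less_unbalanced:
  assumes "near_pow2 (a + b)" "1 \<le> a" "a + 2 \<le> b"
  shows "mb_colless (a + b) < mb_colless a + mb_colless b + natdist a b"
proof -
  have dist: "natdist a b = b - a"
    using assms(3) by (simp add: natdist_def)
  from assms(1) show ?thesis
  proof (cases rule: near_pow2E)
    case (below k)
    then have "2^k < b" "b < 2^(k + 1)"
      using assms(2,3) by simp_all
    then have "k \<le> mb_colless b"
      by (rule mb_colless_between_pow)
    moreover have "mb_colless (a + b) = k"
      using below mb_colless_pow_minus_1[of "Suc k"] by simp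
    ultimately show ?thesis
      using dist assms(3) by simp
  next
    case (exact k)
    then show ?thesis
      using mb_colless_pow[of "Suc k"] dist assms(3) by simp
  next
    case (above k)
    then have colless_n: "mb_colless (a + b) = k + 1"
      using mb_colless_pow_plus_1[of "Suc k"] by simp
    show ?thesis
    proof (cases "b = 2 * 2^k")
      case True
      then have "k \<noteq> 0"
        using assms(2,3) above by (intro notI) simp
      moreover have "k < 2^k"
        by (rule less_exp)
      moreover have "a = 1"
        using True above by simp
      ultimately show ?thesis
        using colless_n dist True by linarith
    next
      case False
      then have "2^k < b" "b < 2^(k + 1)"
        using above assms(2,3) by simp_all
      then have "k \<le> mb_colless b"
        by (rule mb_colless_between_pow)
      then show ?thesis
        using colless_n dist assms(3) by simp
    qed
  qed
qed

lemma optimal_near_pow2_iso_mb_tree: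
  "near_pow2 (leaves T) \<Longrightarrow> optimal T \<Longrightarrow> btree_iso T (mb_tree (leaves T))"
proof (induction T)
  case Leaf
  then show ?case
    by (simp add: mb_tree_Leaf btree_iso.iso_leaf)
next
  case (Node l r)
  define a b where "a = leaves l" "b = leaves r"
  have near: "near_pow2 (a + b)"
    using Node.prems(1) unfolding a_b_def by simp
  have opt: "optimal l" "optimal r"
    and colless_split: "mb_colless (a + b) = mb_colless a + mb_colless b + natdist a b"
    using optimal_NodeD[OF Node.prems(2)] unfolding a_b_def by simp_all
  have pos: "1 \<le> a" "1 \<le> b"
    unfolding a_b_def by (rule leaves_pos)+
  have "natdist a b \<le> 1"
  proof (rule ccontr)
    assume "\<not> natdist a b \<le> 1"
    then have "a + 2 \<le> b \<or> b + 2 \<le> a"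
      by (auto simp: natdist_def split: if_splits)
    then show False
      using mb_colless_less_unbalanced[of a b] mb_colless_less_unbalanced[of b a]
        near colless_split pos by (auto simp: add.commute natdist_sym)
  qed
  then have halves: "(a = (a + b + 1) div 2 \<and> b = (a + b) div 2) \<or> (b = (a + b + 1) div 2 \<and> a = (a + b) div 2)"
    by (rule natdist_le_1_halves)
  moreover have "2 \<le> a + b"
    using pos by simp
  ultimately have "near_pow2 a" "near_pow2 b"
    using near_pow2_halves[OF near] by auto
  then have "btree_iso l (mb_tree a)" "btree_iso r (mb_tree b)"
    using Node.IH opt unfolding a_b_def by simp_all
  then show ?case
    using halves mb_tree_rec[OF \<open>2 \<le> a + b\<close>] unfolding a_b_def
    by (auto intro: btree_iso.intros)
qed

section \<open>Several optimal trees\<close>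

lemma near_pow2_double_oddE:
  assumes "near_pow2 p" "\<not> near_pow2 (2 * p)"
  obtains q where "1 \<le> q" "p = 2 * q + 1"
  using assms(1)
proof (cases rule: near_pow2E)
  case (below k)
  have "k \<noteq> 0"
  proof
    assume "k = 0"
    then have "2 * p = 2^1"
      using below by simp
    then show False
      using assms(2) near_pow2_pow by metis
  qed
  then have "2 \<le> (2::nat)^k"
    by (cases k) auto
  then have "1 \<le> (2::nat)^k - 1" "p = 2 * (2^k - 1) + 1"
    using below by linarith+
  then show ?thesis
    using that by blast
next
  case (exact k)
  then have "2 * p = 2^(k + 2)"
    by simp
  then show ?thesis
    using assms(2) near_pow2_pow by metis
next
  case (above k)
  then show ?thesis
    using that[of "2^k"] by simp
qed

lemma near_pow2_odd:
  assumes "near_pow2 p" "near_pow2 (p + 1)"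
  shows "near_pow2 (2 * p + 1)"
  using assms(1)
proof (cases rule: near_pow2E)
  case (below k)
  have "1 \<le> (2::nat)^k" "(2::nat)^(k + 2) = 4 * 2^k"
    by simp_all
  then have "2 * p + 1 = 2^(k + 2) - 1"
    using below by linarith
  then show ?thesis
    using near_pow2_pow_minus_1[of "k + 2"] by simp
next
  case (exact k)
  then have "2 * p + 1 = 2^(k + 2) + 1"
    by simp
  then show ?thesis
    using near_pow2_pow_plus_1 by metis
next
  case (above k)
  \<comment> \<open>\<open>p + 1\<close> is even, so it must be a power of two, which forces \<open>p = 3\<close>\<close>
  from assms(2) have "k = 0"
  proof (cases rule: near_pow2E)
    case (exact j)
    then have "(2::nat)^j = 2^k + 1"
      using above by simp
    then show ?thesis
      by (rule pow2_eq_pow2_plus_1)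
  qed (use above in presburger)+
  then have "2 * p + 1 = 2^3 - 1"
    using above by simp
  then show ?thesis
    using near_pow2_pow_minus_1[of 3] by simp
qed

definition optimal_not_unique :: "nat \<Rightarrow> bool" where
  "optimal_not_unique n \<longleftrightarrow>
     (\<exists>T1 T2. leaves T1 = n \<and> leaves T2 = n \<and> optimal T1 \<and> optimal T2 \<and> \<not> btree_iso T1 T2)"

lemma optimal_not_unique_add:
  assumes "optimal_not_unique p" "1 \<le> q" "natdist p q \<le> 1"
  shows "optimal_not_unique (p + q)"
proof -
  obtain T1 T2 where T: "leaves T1 = p" "leaves T2 = p" "optimal T1" "optimal T2" "\<not> btree_iso T1 T2"
    using assms(1) unfolding optimal_not_unique_def by blast
  have "optimal (Node T1 (mb_tree q))" "optimal (Node T2 (mb_tree q))"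
    using T assms(2,3) optimal_mb_tree leaves_mb_tree by (simp_all add: optimal_Node_balanced)
  moreover have "leaves (Node T1 (mb_tree q)) = p + q" "leaves (Node T2 (mb_tree q)) = p + q"
    using T assms(2) leaves_mb_tree by simp_all
  ultimately show ?thesis
    unfolding optimal_not_unique_def using not_btree_iso_Node_left[OF T(5)] by blast
qed

lemma optimal_not_unique_twice_odd:
  assumes "1 \<le> q"
  shows "optimal_not_unique (2 * (2 * q + 1))"
proof -
  let ?n = "2 * (2 * q + 1)"
  let ?T = "Node (mb_tree (2 * q)) (mb_tree (2 * q + 2))"
  have leaves: "leaves (mb_tree ?n) = ?n" "leaves ?T = ?n"
    using assms by (simp_all add: leaves_mb_tree)
  have "mb_colless (2 * (q + 1)) = 2 * mb_colless (q + 1)"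
    by (rule mb_colless_double)
  then have "mb_colless (2 * q + 2) = 2 * mb_colless (q + 1)"
    by simp
  then have "colless ?T = 2 * mb_colless q + 2 * mb_colless (q + 1) + 2"
    using assms by (simp add: colless_mb_tree leaves_mb_tree mb_colless_double natdist_def)
  also have "\<dots> = mb_colless ?n"
    using mb_colless_double[of "2 * q + 1"] mb_colless_odd[OF assms] by simp
  finally have "optimal ?T"
    using leaves unfolding optimal_def by simp
  moreover have "\<not> btree_iso (mb_tree ?n) ?T"
  proof
    assume iso: "btree_iso (mb_tree ?n) ?T"
    have "mb_tree ?n = Node (mb_tree (2 * q + 1)) (mb_tree (2 * q + 1))"
      by (simp add: mb_tree_rec)
    with iso have "leaves (mb_tree (2 * q + 1)) \<in> {leaves (mb_tree (2 * q)), leaves (mb_tree (2 * q + 2))}"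
      by (auto elim: btree_iso.cases dest: btree_iso_leaves)
    then show False
      using assms by (simp add: leaves_mb_tree)
  qed
  ultimately show ?thesis
    unfolding optimal_not_unique_def using leaves optimal_mb_tree by blast
qed

lemma optimal_not_unique_odd:
  assumes "1 \<le> p" "optimal_not_unique p \<or> optimal_not_unique (p + 1)"
  shows "optimal_not_unique (2 * p + 1)"
  using assms(2)
proof
  assume "optimal_not_unique p"
  then show ?thesis
    using optimal_not_unique_add[of p "p + 1"] by (simp add: natdist_def mult_2)
next
  assume "optimal_not_unique (p + 1)"
  then show ?thesis
    using optimal_not_unique_add[of "p + 1" p] assms(1) by (simp add: natdist_def mult_2)
qed

lemma optimal_not_unique_if_not_near_pow2:
  "1 \<le> n \<Longrightarrow> \<not> near_pow2 n \<Longrightarrow> optimal_not_unique n"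
proof (induction n rule: less_induct)
  case (less n)
  define p where "p = n div 2"
  have p: "n = 2 * p \<or> n = 2 * p + 1"
    unfolding p_def by presburger
  have "1 \<le> p"
  proof (rule ccontr)
    assume "\<not> 1 \<le> p"
    then have "n = 2^0"
      using p less.prems(1) by simp
    then show False
      using less.prems(2) near_pow2_pow by metis
  qed
  show ?case
  proof (cases "n = 2 * p")
    case True
    show ?thesis
    proof (cases "near_pow2 p")
      case True
      then obtain q where "1 \<le> q" "p = 2 * q + 1"
        using near_pow2_double_oddE \<open>n = 2 * p\<close> less.prems(2) by metis
      then show ?thesis
        using optimal_not_unique_twice_odd \<open>n = 2 * p\<close> by simp
    next
      case False
      then have "optimal_not_unique p"
        using less.IH[of p] \<open>1 \<le> p\<close> \<open>n = 2 * p\<close> by simp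
      then show ?thesis
        using optimal_not_unique_add[of p p] \<open>1 \<le> p\<close> \<open>n = 2 * p\<close> by (simp add: natdist_def mult_2)
    qed
  next
    case False
    then have odd_n: "n = 2 * p + 1"
      using p by simp
    then have "\<not> near_pow2 p \<or> \<not> near_pow2 (p + 1)"
      using near_pow2_odd less.prems(2) by blast
    then have "optimal_not_unique p \<or> optimal_not_unique (p + 1)"
      using less.IH[of p] less.IH[of "p + 1"] \<open>1 \<le> p\<close> odd_n by auto
    then show ?thesis
      using optimal_not_unique_odd \<open>1 \<le> p\<close> odd_n by blast
  qed
qed

section \<open>Maximally balanced GFB trees\<close>

definition is_pow2 :: "nat \<Rightarrow> bool" where
  "is_pow2 x \<longleftrightarrow> (\<exists>j. x = 2^j)"

lemma is_pow2_le_2: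
  assumes "1 \<le> x" "x \<le> 2"
  shows "is_pow2 x"
proof -
  from assms have "x = 2^0 \<or> x = 2^1"
    by auto
  then show ?thesis
    unfolding is_pow2_def by blast
qed

lemma is_pow2_add_balanced_pair:
  assumes "is_pow2 x" "is_pow2 y" "x \<le> y" "y \<le> x + 1" "\<not> is_pow2 (x + y)"
  shows "x = 1"
proof -
  obtain i j where ij: "x = 2^i" "y = 2^j"
    using assms(1,2) unfolding is_pow2_def by blast
  have "y \<noteq> x"
  proof
    assume "y = x"
    then have "x + y = 2^(i + 1)"
      using ij by simp
    with assms(5) show False
      unfolding is_pow2_def by blast
  qed
  with assms(3,4) have "y = x + 1"
    by simp
  with ij have "(2::nat)^j = 2^i + 1"
    by simp
  then show "x = 1"
    using pow2_eq_pow2_plus_1 ij by simp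
qed

lemma near_pow2_add_balanced:
  assumes "x \<le> y" "y \<le> x + 1" "is_pow2 x \<or> is_pow2 y"
  shows "near_pow2 (x + y)"
proof (cases "y = x")
  case True
  with assms(3) obtain j where "x = 2^j" "y = 2^j"
    unfolding is_pow2_def by blast
  then have "x + y = 2^(j + 1)"
    by simp
  then show ?thesis
    using near_pow2_pow by metis
next
  case False
  with assms(1,2) have y: "y = x + 1"
    by simp
  from assms(3) show ?thesis
  proof
    assume "is_pow2 x"
    then obtain j where "x = 2^j"
      unfolding is_pow2_def by blast
    then have "x + y = 2^(j + 1) + 1"
      using y by simp
    then show ?thesis
      using near_pow2_pow_plus_1 by metis
  next
    assume "is_pow2 y"
    then obtain j where "y = 2^j"
      unfolding is_pow2_def by blast
    then have "x + y = 2^(j + 1) - 1"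
      using y by simp
    then show ?thesis
      using near_pow2_pow_minus_1[of "j + 1"] by simp
  qed
qed

lemma gfb_stepE:
  assumes "gfb_step M M'"
  obtains u v M0 where "M = add_mset u (add_mset v M0)" "M' = add_mset (Node u v) M0"
    "\<forall>w\<in>#M. leaves u \<le> leaves w" "\<forall>w\<in>#add_mset v M0. leaves v \<le> leaves w"
  using assms
proof cases
  case (1 u v)
  define M0 where "M0 = M - {#u#} - {#v#}"
  have Mu: "M - {#u#} = add_mset v M0"
    unfolding M0_def by (simp only: insert_DiffM[OF 1(4)])
  then have "M = add_mset u (add_mset v M0)"
    using 1(2) by (metis insert_DiffM)
  moreover have "M' = add_mset (Node u v) M0"
    using 1(1) unfolding M0_def by simp
  moreover have "\<forall>w\<in>#add_mset v M0. leaves v \<le> leaves w"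
    using 1(5) unfolding Mu .
  ultimately show ?thesis
    using that 1(3) by blast
qed

lemma gfb_step_max_balanced:
  "gfb_step M M' \<Longrightarrow> \<forall>t\<in>#M'. max_balanced t \<Longrightarrow> \<forall>t\<in>#M. max_balanced t"
  by (elim gfb_stepE) auto

definition non_pow2_count :: "btree multiset \<Rightarrow> nat" where
  "non_pow2_count M = size (filter_mset (\<lambda>t. \<not> is_pow2 (leaves t)) M)"

lemma non_pow2_count_add_mset [simp]:
  "non_pow2_count (add_mset t M) = (if is_pow2 (leaves t) then 0 else 1) + non_pow2_count M"
  unfolding non_pow2_count_def by simp

lemma non_pow2_count_eq_0_iff: "non_pow2_count M = 0 \<longleftrightarrow> (\<forall>t\<in>#M. is_pow2 (leaves t))"
  unfolding non_pow2_count_def by auto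

text \<open>The last clause prevents merging sizes 1 and 2 into 3 while another size is not a power of two.\<close>
definition gfb_invariant :: "btree multiset \<Rightarrow> bool" where
  "gfb_invariant M \<longleftrightarrow>
     (\<forall>t\<in>#M. near_pow2 (leaves t)) \<and> non_pow2_count M \<le> 1 \<and>
     ((\<exists>t\<in>#M. leaves t = 1) \<longrightarrow> (\<forall>t\<in>#M. leaves t \<le> 2))"

lemma gfb_step_invariant:
  assumes step: "gfb_step M M'" and inv: "gfb_invariant M" and mb: "\<forall>t\<in>#M'. max_balanced t"
  shows "gfb_invariant M'"
proof -
  obtain u v M0 where M: "M = add_mset u (add_mset v M0)" and M': "M' = add_mset (Node u v) M0"
    and u_min: "\<forall>w\<in>#M. leaves u \<le> leaves w" and v_min: "\<forall>w\<in>#add_mset v M0. leaves v \<le> leaves w"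
    using step by (rule gfb_stepE)
  define x y where "x = leaves u" "y = leaves v"
  have "x \<le> y"
    using u_min M unfolding x_y_def by simp
  moreover have "natdist x y \<le> 1"
    using mb M' unfolding x_y_def by simp
  ultimately have y_le: "y \<le> x + 1"
    by (simp add: natdist_def)
  have "non_pow2_count M = (if is_pow2 x then 0 else 1) + (if is_pow2 y then 0 else 1) + non_pow2_count M0"
    unfolding M x_y_def by simp
  then have count: "(if is_pow2 x then 0 else 1) + (if is_pow2 y then 0 else 1) + non_pow2_count M0 \<le> (1::nat)"
    using inv unfolding gfb_invariant_def by simp
  then have "is_pow2 x \<or> is_pow2 y"
    by (auto split: if_splits)
  then have near: "near_pow2 (x + y)"
    using near_pow2_add_balanced \<open>x \<le> y\<close> y_le by blast
  have small: "\<forall>t\<in>#M0. leaves t \<le> 2" if "x = 1"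
    using inv M that unfolding gfb_invariant_def x_y_def by auto
  have "non_pow2_count M' \<le> 1"
  proof (cases "is_pow2 (x + y)")
    case False
    have "non_pow2_count M0 = 0"
    proof (cases "is_pow2 x \<and> is_pow2 y")
      case True
      with False have "x = 1"
        using is_pow2_add_balanced_pair \<open>x \<le> y\<close> y_le by blast
      then show ?thesis
        using small is_pow2_le_2 leaves_pos by (auto simp: non_pow2_count_eq_0_iff)
    qed (use count in auto)
    then show ?thesis
      using M' unfolding x_y_def by simp
  qed (use count M' x_y_def in auto)
  moreover have "\<forall>t\<in>#M'. leaves t \<le> 2" if singleton: "\<exists>t\<in>#M'. leaves t = 1"
  proof -
    obtain t where "t \<in># M0" "leaves t = 1"
      using singleton M' leaves_pos[of u] leaves_pos[of v] by auto
    then have "x \<le> 1" "y \<le> 1"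
      using u_min v_min M unfolding x_y_def by auto
    then have "x = 1" "y = 1"
      using leaves_pos[of u] leaves_pos[of v] unfolding x_y_def by simp_all
    then show ?thesis
      using small M' unfolding x_y_def by simp
  qed
  ultimately show ?thesis
    using inv near M M' unfolding gfb_invariant_def x_y_def by auto
qed

lemma gfb_run_invariant:
  assumes "gfb_step\<^sup>*\<^sup>* (replicate_mset n Leaf) M" "\<forall>t\<in>#M. max_balanced t"
  shows "gfb_invariant M"
  using assms
proof (induction rule: rtranclp_induct)
  case base
  have "near_pow2 1" "is_pow2 1"
    using near_pow2_pow[of 0] unfolding is_pow2_def by (auto intro: exI[of _ 0])
  moreover from \<open>is_pow2 1\<close> have "non_pow2_count (replicate_mset n Leaf) = 0"
    by (simp add: non_pow2_count_eq_0_iff)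
  ultimately show ?case
    unfolding gfb_invariant_def by simp
next
  case (step M1 M2)
  then show ?case
    using gfb_step_max_balanced gfb_step_invariant by blast
qed

lemma gfb_tree_max_balanced_near_pow2:
  assumes "gfb_tree n T" "max_balanced T"
  shows "near_pow2 (leaves T)"
  using gfb_run_invariant[of n "{#T#}"] assms unfolding gfb_tree_def gfb_invariant_def by simp

theorem corollary7:
  fixes n :: nat
  assumes "n \<ge> 1"
  shows "((\<forall>m\<ge>1. n \<notin> {2^m - 1, 2^m, 2^m + 1}) \<longrightarrow>
            (\<forall>T1 T2. leaves T1 = n \<and> max_balanced T1 \<and> gfb_tree n T2
                 \<longrightarrow> \<not> btree_iso T1 T2) \<and>
            (\<exists>T1 T2. leaves T1 = n \<and> leaves T2 = n \<and>
                 colless T1 = min_colless n \<and> colless T2 = min_colless n \<and>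
                 \<not> btree_iso T1 T2))
       \<and> ((\<exists>m\<ge>1. n \<in> {2^m - 1, 2^m, 2^m + 1}) \<longrightarrow>
            (\<exists>T. leaves T = n \<and> colless T = min_colless n \<and>
               (\<forall>T'. leaves T' = n \<and> colless T' = min_colless n \<longrightarrow> btree_iso T' T)))"
proof (intro conjI impI)
  have optimal_iff: "leaves T = n \<Longrightarrow> optimal T \<longleftrightarrow> colless T = min_colless n" for T
    unfolding optimal_def using min_colless_eq_mb_colless[OF assms] by simp
  {
    assume "\<forall>m\<ge>1. n \<notin> {2^m - 1, 2^m, 2^m + 1}"
    then have not_near: "\<not> near_pow2 n"
      unfolding near_pow2_def by blast
    then show "\<forall>T1 T2. leaves T1 = n \<and> max_balanced T1 \<and> gfb_tree n T2 \<longrightarrow> \<not> btree_iso T1 T2"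
      using gfb_tree_max_balanced_near_pow2 btree_iso_max_balanced btree_iso_leaves by metis
    show "\<exists>T1 T2. leaves T1 = n \<and> leaves T2 = n \<and>
            colless T1 = min_colless n \<and> colless T2 = min_colless n \<and> \<not> btree_iso T1 T2"
      using optimal_not_unique_if_not_near_pow2[OF assms not_near] optimal_iff
      unfolding optimal_not_unique_def by metis
  }
  assume "\<exists>m\<ge>1. n \<in> {2^m - 1, 2^m, 2^m + 1}"
  then have "near_pow2 n"
    unfolding near_pow2_def by blast
  then show "\<exists>T. leaves T = n \<and> colless T = min_colless n \<and>
      (\<forall>T'. leaves T' = n \<and> colless T' = min_colless n \<longrightarrow> btree_iso T' T)"
    using optimal_near_pow2_iso_mb_tree optimal_mb_tree leaves_mb_tree[OF assms] optimal_iff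
    by metis
qed

end
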